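(* Let $-\infty<t_1<t_2<+\infty$, $b>1$, and let $z\in\mathbb{C}$ with $\operatorname{Im}z>0$ satisfy $\bigl|z-\frac{t_1+t_2}2\bigr|\ge b\,\frac{t_2-t_1}2$. Then $$\omega(z,[t_1,t_2])\ge\frac{b-1}{2\pi b}\,\frac{(t_2-t_1)\operatorname{Im}z}{|z|^2-\operatorname{Re}z\,(t_1+t_2)+t_1t_2}\ge\frac{b-1}{2\pi b}\,\frac{(t_2-t_1)\operatorname{Im}z}{(|z|+|t_1|)(|z|+|t_2|)}.$$
   Context: For $z$ with $\operatorname{Im}z>0$ and Borel $B\subset\mathbb{R}$, $\omega(z,B)=\frac1\pi\int_B\frac{\operatorname{Im}z}{(t-\operatorname{Re}z)^2+(\operatorname{Im}z)^2}dt$ is the harmonic measure of the upper half-plane. *)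

theory Defs
  imports "HOL-Analysis.Analysis"
begin

definition harmonic_measure :: "complex \<Rightarrow> real set \<Rightarrow> real" where
  "harmonic_measure z B =
     (1 / pi) * (\<integral>t\<in>B. Im z / ((t - Re z)\<^sup>2 + (Im z)\<^sup>2) \<partial>lborel)"

end

theory Submission
  imports Defs
begin

text \<open>
  By the fundamental theorem of calculus the harmonic measure of [t1, t2] is the difference of
  two arctangents, i.e. 1/pi times the angle under which the interval is seen from z. Outside the
  disc with diameter [t1, t2] this angle is acute and equals arctan u with
  u = (t2 - t1) Im z / (|z|^2 - Re z (t1 + t2) + t1 t2). On the smaller region
  |z - (t1 + t2)/2| \<ge> b (t2 - t1)/2 one has u \<le> (b + 1)/(b - 1), and there the elementary bound
  arctan u \<ge> u/(1 + u) yields the linear lower bound (b - 1) u/(2 b). The second inequality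
  holds because the denominator of u is Re ((z - t1) cnj (z - t2)) \<le> |z - t1| |z - t2|.
\<close>

lemma harmonic_measure_interval:
  fixes t1 t2 :: real and z :: complex
  assumes "t1 \<le> t2" and "Im z > 0"
  shows "harmonic_measure z {t1..t2} =
           (arctan ((t2 - Re z) / Im z) - arctan ((t1 - Re z) / Im z)) / pi"
proof -
  let ?f = "\<lambda>t. Im z / ((t - Re z)\<^sup>2 + (Im z)\<^sup>2)"
  have "DERIV (\<lambda>t. arctan ((t - Re z) / Im z)) t :> ?f t" for t
    using assms(2) by (auto intro!: derivative_eq_intros simp: field_simps power2_eq_square)
  moreover have "isCont ?f t" for t
    using assms(2) by (auto intro!: continuous_intros simp: add_nonneg_pos)
  ultimately have "(\<integral>t. ?f t * indicator {t1..t2} t \<partial>lborel) =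
                     arctan ((t2 - Re z) / Im z) - arctan ((t1 - Re z) / Im z)"
    by (rule integral_FTC_Icc_real[OF assms(1)])
  then show ?thesis
    by (simp add: harmonic_measure_def set_lebesgue_integral_def mult.commute)
qed

lemma arctan_diff:
  fixes x y :: real
  assumes "0 < 1 + x * y"
  shows "arctan x - arctan y = arctan ((x - y) / (1 + x * y))"
proof -
  txt \<open>The hypothesis makes the cosine of the difference positive, so the difference lies in
    (-pi/2, pi/2), where the tangent subtraction formula can be inverted by arctan.\<close>
  have "cos (arctan x - arctan y) = cos (arctan x) * cos (arctan y) * (1 + x * y)"
    by (simp add: cos_diff cos_arctan sin_arctan add_divide_distrib)
  then have "0 < cos \<bar>arctan x - arctan y\<bar>"
    using assms by (simp add: cos_arctan add_pos_nonneg)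
  moreover have "\<bar>arctan x - arctan y\<bar> \<le> pi"
    using arctan_bounded[of x] arctan_bounded[of y] by linarith
  ultimately have "\<bar>arctan x + arctan (- y)\<bar> < pi/2"
    using cos_mono_le_eq[of "\<bar>arctan x - arctan y\<bar>" "pi/2"] by (auto simp: arctan_minus)
  then show ?thesis
    using arctan_add_raw[of x "- y"] by (simp add: arctan_minus)
qed

lemma divide_one_plus_le_arctan:
  fixes x :: real
  assumes "0 \<le> x"
  shows "x / (1 + x) \<le> arctan x"
proof -
  let ?g = "\<lambda>x. arctan x - x / (1 + x)"
  have "?g 0 \<le> ?g x"
  proof (rule DERIV_nonneg_imp_nondecreasing[OF assms])
    fix v :: real
    assume "0 \<le> v"
    then have "DERIV ?g v :> 1 / (1 + v\<^sup>2) - 1 / (1 + v)\<^sup>2"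
      by (auto intro!: derivative_eq_intros simp: inverse_eq_divide power2_eq_square)
    moreover have "1 / (1 + v)\<^sup>2 \<le> 1 / (1 + v\<^sup>2)"
      using \<open>0 \<le> v\<close> by (intro divide_left_mono mult_pos_pos)
        (auto simp: power2_eq_square algebra_simps add_pos_nonneg)
    ultimately show "\<exists>d. DERIV ?g v :> d \<and> 0 \<le> d" by auto
  qed
  then show ?thesis by simp
qed

lemma arctan_ge_linear:
  fixes x M :: real
  assumes "0 \<le> x" and "x \<le> M"
  shows "x / (1 + M) \<le> arctan x"
proof -
  have "x / (1 + M) \<le> x / (1 + x)"
    using assms by (intro divide_left_mono) auto
  also have "\<dots> \<le> arctan x"
    using assms(1) by (rule divide_one_plus_le_arctan)
  finally show ?thesis .
qed

text \<open>The positivity hypothesis says that z lies outside the closed disc with diameter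
  [t1, t2]; inside it the right-hand side would be off by exactly 1.\<close>

lemma harmonic_measure_interval_eq_arctan:
  fixes t1 t2 :: real and z :: complex
  assumes "t1 \<le> t2" and "Im z > 0"
    and "0 < (cmod z)\<^sup>2 - Re z * (t1 + t2) + t1 * t2"
  shows "harmonic_measure z {t1..t2} =
           arctan ((t2 - t1) * Im z / ((cmod z)\<^sup>2 - Re z * (t1 + t2) + t1 * t2)) / pi"
proof -
  define D where "D = (cmod z)\<^sup>2 - Re z * (t1 + t2) + t1 * t2"
  have "1 + (t2 - Re z) / Im z * ((t1 - Re z) / Im z) = D / (Im z)\<^sup>2"
    using assms(2) unfolding D_def cmod_power2 by (simp add: field_simps power2_eq_square)
  then have "arctan ((t2 - Re z) / Im z) - arctan ((t1 - Re z) / Im z) =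
               arctan (((t2 - Re z) / Im z - (t1 - Re z) / Im z) / (D / (Im z)\<^sup>2))"
    using arctan_diff[of "(t2 - Re z) / Im z" "(t1 - Re z) / Im z"] assms(2,3)
    unfolding D_def by simp
  also have "\<dots> = arctan ((t2 - t1) * Im z / D)"
    using assms(2,3) unfolding D_def[symmetric]
    by (intro arg_cong[where f = arctan]) (simp add: field_simps power2_eq_square)
  finally show ?thesis
    using assms(1,2) by (simp add: harmonic_measure_interval D_def)
qed

lemma interval_quadratic_eq_midpoint:
  fixes t1 t2 :: real and z :: complex
  shows "(cmod z)\<^sup>2 - Re z * (t1 + t2) + t1 * t2 =
           (cmod (z - of_real ((t1 + t2) / 2)))\<^sup>2 - ((t2 - t1) / 2)\<^sup>2"
  unfolding cmod_power2 by (simp add: power2_eq_square field_simps)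

lemma interval_quadratic_le:
  fixes t1 t2 :: real and z :: complex
  shows "(cmod z)\<^sup>2 - Re z * (t1 + t2) + t1 * t2 \<le> (cmod z + \<bar>t1\<bar>) * (cmod z + \<bar>t2\<bar>)"
proof -
  have "(cmod z)\<^sup>2 - Re z * (t1 + t2) + t1 * t2 = Re ((z - of_real t1) * cnj (z - of_real t2))"
    unfolding cmod_power2 by (simp add: power2_eq_square algebra_simps)
  also have "\<dots> \<le> cmod (z - of_real t1) * cmod (z - of_real t2)"
    using complex_Re_le_cmod by (metis complex_mod_cnj norm_mult)
  also have "\<dots> \<le> (cmod z + \<bar>t1\<bar>) * (cmod z + \<bar>t2\<bar>)"
    using norm_triangle_ineq4[of z "of_real t1"] norm_triangle_ineq4[of z "of_real t2"]
    by (intro mult_mono) auto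
  finally show ?thesis .
qed

lemma chord_ratio_le:
  fixes h r y b :: real
  assumes "0 < h" and "1 < b" and "b * h \<le> r" and "y \<le> r"
  shows "2 * h * y / (r\<^sup>2 - h\<^sup>2) \<le> (b + 1) / (b - 1)"
proof -
  have "h < b * h"
    using assms by simp
  then have "h < r"
    using assms(3) by linarith
  then have "0 < r\<^sup>2 - h\<^sup>2"
    using assms(1) by (simp add: power_strict_mono)
  have "(b - 1) * (2 * h) \<le> (b + 1) * (r + b * h)"
    using assms \<open>h < b * h\<close> by (intro mult_mono) linarith+
  then have "0 \<le> (r - b * h) * ((b + 1) * (r + b * h) - (b - 1) * (2 * h))"
    using assms(3) by simp
  moreover have "0 \<le> (b - 1) * (b\<^sup>2 + 1) * h\<^sup>2"
    using assms(2) by simp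
  txt \<open>The extremal case is r = b h, where the excess below equals (b - 1)(b^2 + 1) h^2.\<close>
  moreover have "(b + 1) * (r\<^sup>2 - h\<^sup>2) - (b - 1) * (2 * h * r) =
      (r - b * h) * ((b + 1) * (r + b * h) - (b - 1) * (2 * h)) + (b - 1) * (b\<^sup>2 + 1) * h\<^sup>2"
    by (simp add: power2_eq_square algebra_simps)
  ultimately have "(b - 1) * (2 * h * r) \<le> (b + 1) * (r\<^sup>2 - h\<^sup>2)"
    by linarith
  moreover have "(b - 1) * (2 * h * y) \<le> (b - 1) * (2 * h * r)"
    using assms by (intro mult_left_mono) auto
  ultimately show ?thesis
    using assms(2) \<open>0 < r\<^sup>2 - h\<^sup>2\<close> by (simp add: divide_simps mult.commute mult.left_commute)
qed

lemma interval_quadratic_outside_scaled_disc: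
  fixes t1 t2 b :: real and z :: complex
  assumes "t1 < t2" and "1 < b"
    and "b * ((t2 - t1) / 2) \<le> cmod (z - of_real ((t1 + t2) / 2))"
  shows "0 < (cmod z)\<^sup>2 - Re z * (t1 + t2) + t1 * t2"
    and "(t2 - t1) * Im z / ((cmod z)\<^sup>2 - Re z * (t1 + t2) + t1 * t2) \<le> (b + 1) / (b - 1)"
proof -
  define h where "h = (t2 - t1) / 2"
  define r where "r = cmod (z - of_real ((t1 + t2) / 2))"
  have "0 < h" "b * h \<le> r" "Im z \<le> r"
    using assms abs_Im_le_cmod[of "z - of_real ((t1 + t2) / 2)"]
    unfolding h_def r_def by auto
  have D_eq: "(cmod z)\<^sup>2 - Re z * (t1 + t2) + t1 * t2 = r\<^sup>2 - h\<^sup>2"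
    unfolding h_def r_def by (rule interval_quadratic_eq_midpoint)
  have "h < b * h"
    using \<open>0 < h\<close> assms(2) by simp
  then have "h < r"
    using \<open>b * h \<le> r\<close> by linarith
  then show "0 < (cmod z)\<^sup>2 - Re z * (t1 + t2) + t1 * t2"
    unfolding D_eq using \<open>0 < h\<close> by (simp add: power_strict_mono)
  have "2 * h = t2 - t1"
    unfolding h_def by simp
  then show "(t2 - t1) * Im z / ((cmod z)\<^sup>2 - Re z * (t1 + t2) + t1 * t2) \<le> (b + 1) / (b - 1)"
    using chord_ratio_le[OF \<open>0 < h\<close> assms(2) \<open>b * h \<le> r\<close> \<open>Im z \<le> r\<close>]
    unfolding D_eq by simp
qed

theorem proposition4:
  fixes t1 t2 b :: real and z :: complex
  assumes "t1 < t2" and "b > 1" and "Im z > 0"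
    and "cmod (z - complex_of_real ((t1 + t2) / 2)) \<ge> b * ((t2 - t1) / 2)"
  shows "harmonic_measure z {t1..t2} \<ge>
           (b - 1) / (2 * pi * b) * ((t2 - t1) * Im z /
              ((cmod z)\<^sup>2 - Re z * (t1 + t2) + t1 * t2)) \<and>
         (b - 1) / (2 * pi * b) * ((t2 - t1) * Im z /
              ((cmod z)\<^sup>2 - Re z * (t1 + t2) + t1 * t2)) \<ge>
         (b - 1) / (2 * pi * b) * ((t2 - t1) * Im z /
              ((cmod z + \<bar>t1\<bar>) * (cmod z + \<bar>t2\<bar>)))"
proof -
  define D where "D = (cmod z)\<^sup>2 - Re z * (t1 + t2) + t1 * t2"
  define u where "u = (t2 - t1) * Im z / D"
  have "0 < D" and "u \<le> (b + 1) / (b - 1)"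
    using interval_quadratic_outside_scaled_disc[OF assms(1,2,4)] unfolding u_def D_def by auto
  moreover have "0 \<le> u"
    unfolding u_def using assms \<open>0 < D\<close> by simp
  ultimately have "(b - 1) / (2 * pi * b) * u = u / (1 + (b + 1) / (b - 1)) / pi"
    using assms(2) by (simp add: field_simps)
  also have "\<dots> \<le> arctan u / pi"
    using arctan_ge_linear[OF \<open>0 \<le> u\<close> \<open>u \<le> (b + 1) / (b - 1)\<close>]
    by (rule divide_right_mono) simp
  also have "\<dots> = harmonic_measure z {t1..t2}"
    using harmonic_measure_interval_eq_arctan[of t1 t2 z] assms \<open>0 < D\<close>
    unfolding u_def D_def by simp
  finally have lower: "(b - 1) / (2 * pi * b) * u \<le> harmonic_measure z {t1..t2}" .
  have "(t2 - t1) * Im z / ((cmod z + \<bar>t1\<bar>) * (cmod z + \<bar>t2\<bar>)) \<le> u"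
    using interval_quadratic_le[of z t1 t2] \<open>0 < D\<close> assms unfolding u_def D_def
    by (intro divide_left_mono) auto
  then have upper: "(b - 1) / (2 * pi * b) *
      ((t2 - t1) * Im z / ((cmod z + \<bar>t1\<bar>) * (cmod z + \<bar>t2\<bar>))) \<le> (b - 1) / (2 * pi * b) * u"
    using assms(2) by (intro mult_left_mono) auto
  show ?thesis
    using lower upper unfolding u_def D_def by blast
qed

end
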